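(* Given any non-empty closed subset $S$ of the extended real numbers $\overline{\mathbb{R}}$, there is a real valued function $f$ defined on the closed interval $[0,1]$ such that the set of right hand sequential secant derivatives of $f$ at $0$ equals $S$.
   Context: $\overline{\mathbb{R}}=\mathbb{R}\cup\{\pm\infty\}$. A set $S\subseteq\overline{\mathbb{R}}$ is called closed if every $L\in\overline{\mathbb{R}}$ for which there is a sequence of real numbers $L_n\in S\cap\mathbb{R}$ with $L_n\to L$ belongs to $S$. For $f:[0,1]\to\mathbb{R}$, $L\in\overline{\mathbb{R}}$ is a right hand sequential secant derivative of $f$ at $0$ if there is a sequence $h_n>0$ with $h_n\to0$ and $\frac{f(h_n)-f(0)}{h_n}\to L$ as $n\to\infty$. *)

theory Defs
  imports Complex_Main "HOL-Library.Extended_Real"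
begin

definition ereal_seq_closed :: "ereal set \<Rightarrow> bool" where
  "ereal_seq_closed S \<longleftrightarrow>
     (\<forall>(L::ereal) (x::nat \<Rightarrow> real).
        (\<forall>n. ereal (x n) \<in> S) \<and> (\<lambda>n. ereal (x n)) \<longlonglongrightarrow> L \<longrightarrow> L \<in> S)"

text \<open>Right hand sequential secant derivatives at 0 of f : [0,1] -> R.
  Only the values of f on [0,1] are used (h n ranges over (0,1]).\<close>
definition rh_seq_secant_derivs :: "(real \<Rightarrow> real) \<Rightarrow> ereal set" where
  "rh_seq_secant_derivs f =
     {L. \<exists>h::nat \<Rightarrow> real. (\<forall>n. 0 < h n \<and> h n \<le> 1) \<and> h \<longlonglongrightarrow> 0 \<and>
          (\<lambda>n. ereal ((f (h n) - f 0) / h n)) \<longlonglongrightarrow> L}"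

end

theory Submission
  imports Defs
begin

text \<open>For f x = x * g x the secant quotients at 0 are the values of g, so it suffices to find g
  whose sequential limits at 0+ form exactly S. The function logit (frac (1/x)) takes every real
  value along a null sequence. Compose it with a retraction of the reals onto S that keeps the
  points of S and sends any other t to the infinity of its sign (if that lies in S), the
  infinities being realised at scale x as \<open>\<plusminus>1/x\<close>. Along any null sequence, either the
  values of g eventually lie in S, so their limit is in S by closedness, or they follow
  \<open>\<plusminus>1/x\<close> to an infinity that belongs to S.\<close>

definition rh_seq_limits :: "(real \<Rightarrow> real) \<Rightarrow> ereal set" where
  "rh_seq_limits g =
     {L. \<exists>h::nat \<Rightarrow> real. (\<forall>n. 0 < h n \<and> h n \<le> 1) \<and> h \<longlonglongrightarrow> 0 \<and>
          (\<lambda>n. ereal (g (h n))) \<longlonglongrightarrow> L}"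

lemma rh_seq_secant_derivs_times:
  "rh_seq_secant_derivs (\<lambda>x. x * g x) = rh_seq_limits g"
  unfolding rh_seq_secant_derivs_def rh_seq_limits_def
proof (intro Collect_cong ex_cong1 conj_cong refl)
  fix L and h :: "nat \<Rightarrow> real" assume "\<forall>n. 0 < h n \<and> h n \<le> 1"
  then have "h n \<noteq> 0" for n by (metis less_irrefl)
  then show "((\<lambda>n. ereal ((h n * g (h n) - 0 * g 0) / h n)) \<longlonglongrightarrow> L) \<longleftrightarrow>
      ((\<lambda>n. ereal (g (h n))) \<longlonglongrightarrow> L)"
    by simp
qed

lemma ereal_seq_closedD_eventually:
  assumes "ereal_seq_closed S"
    and "eventually (\<lambda>n. ereal (x n) \<in> S) sequentially"
    and "(\<lambda>n. ereal (x n)) \<longlonglongrightarrow> L"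
  shows "L \<in> S"
proof -
  obtain N where N: "\<And>n. n \<ge> N \<Longrightarrow> ereal (x n) \<in> S"
    using assms(2) unfolding eventually_sequentially by blast
  have "(\<lambda>n. ereal (x (n + N))) \<longlonglongrightarrow> L"
    using LIMSEQ_ignore_initial_segment[OF assms(3)] .
  moreover have "\<forall>n. ereal (x (n + N)) \<in> S" using N by simp
  ultimately show ?thesis
    using assms(1)[unfolded ereal_seq_closed_def, rule_format, of "\<lambda>n. x (n + N)" L] by simp
qed

lemma eventually_less_of_tendsto_at_top:
  assumes "(\<lambda>n. ereal (u n)) \<longlonglongrightarrow> L" and "L \<noteq> \<infinity>"
    and "filterlim v at_top sequentially"
  shows "eventually (\<lambda>n. u n < v n) sequentially"
proof -
  obtain c where "L < ereal c"
    using assms(2) by (cases L) (auto intro: less_add_one)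
  then have "eventually (\<lambda>n. u n < c) sequentially"
    using order_tendstoD(2)[OF assms(1)] by force
  moreover have "eventually (\<lambda>n. c < v n) sequentially"
    using assms(3) by (simp add: filterlim_at_top_dense)
  ultimately show ?thesis by eventually_elim simp
qed

definition ereal_at_scale :: "ereal \<Rightarrow> real \<Rightarrow> real" where
  "ereal_at_scale s x = (case s of ereal r \<Rightarrow> r | PInfty \<Rightarrow> 1 / x | MInfty \<Rightarrow> - 1 / x)"

lemma ereal_at_scale_simps [simp]:
  "ereal_at_scale (ereal r) x = r"
  "ereal_at_scale \<infinity> x = 1 / x"
  "ereal_at_scale (- \<infinity>) x = - 1 / x"
  by (simp_all add: ereal_at_scale_def)

lemma rh_seq_limits_subset:
  assumes closed: "ereal_seq_closed S"
    and scaled: "\<And>x. 0 < x \<Longrightarrow> x \<le> 1 \<Longrightarrow> \<exists>s\<in>S. g x = ereal_at_scale s x"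
  shows "rh_seq_limits g \<subseteq> S"
proof
  fix L assume "L \<in> rh_seq_limits g"
  then obtain h where h: "\<And>n. 0 < h n \<and> h n \<le> 1" "h \<longlonglongrightarrow> 0"
    and lim: "(\<lambda>n. ereal (g (h n))) \<longlonglongrightarrow> L"
    unfolding rh_seq_limits_def by blast
  have "\<forall>n. \<exists>s. s \<in> S \<and> g (h n) = ereal_at_scale s (h n)"
    using scaled h(1) by blast
  then obtain s where s: "\<And>n. s n \<in> S" "\<And>n. g (h n) = ereal_at_scale (s n) (h n)"
    by metis
  have "eventually (\<lambda>n. 0 < h n) sequentially"
    using h(1) by simp
  from filterlim_inverse_at_top[OF h(2) this]
  have inv: "filterlim (\<lambda>n. 1 / h n) at_top sequentially"
    by (simp add: inverse_eq_divide)
  show "L \<in> S"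
  proof (rule ccontr)
    assume "L \<notin> S"
    have "eventually (\<lambda>n. s n \<noteq> \<infinity>) sequentially"
    proof (cases "L = \<infinity>")
      case True
      with s(1) \<open>L \<notin> S\<close> have "s n \<noteq> \<infinity>" for n by metis
      then show ?thesis by simp
    next
      case False
      from eventually_less_of_tendsto_at_top[OF lim False inv]
      show ?thesis
        by eventually_elim (use s(2) in force)
    qed
    moreover have "eventually (\<lambda>n. s n \<noteq> - \<infinity>) sequentially"
    proof (cases "L = - \<infinity>")
      case True
      with s(1) \<open>L \<notin> S\<close> have "s n \<noteq> - \<infinity>" for n by metis
      then show ?thesis by simp
    next
      case False
      have "(\<lambda>n. ereal (- g (h n))) \<longlonglongrightarrow> - L"
        using tendsto_uminus_ereal[OF lim] by simp
      moreover have "- L \<noteq> \<infinity>"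
        using False by (metis ereal_uminus_uminus)
      ultimately have "eventually (\<lambda>n. - g (h n) < 1 / h n) sequentially"
        by (rule eventually_less_of_tendsto_at_top[OF _ _ inv])
      then show ?thesis
        by eventually_elim (use s(2) in force)
    qed
    ultimately have "eventually (\<lambda>n. ereal (g (h n)) \<in> S) sequentially"
    proof eventually_elim
      case (elim n) then show ?case using s[of n] by (cases "s n") simp_all
    qed
    with \<open>L \<notin> S\<close> show False
      using ereal_seq_closedD_eventually[OF closed _ lim] by simp
  qed
qed

definition logistic :: "real \<Rightarrow> real" where
  "logistic t = 1 / (1 + exp (- t))"

definition logit :: "real \<Rightarrow> real" where
  "logit u = ln (u / (1 - u))"

lemma logistic_pos: "0 < logistic t"
  and logistic_less_one: "logistic t < 1"
  unfolding logistic_def by (auto simp: field_simps add_pos_pos)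

lemma logit_logistic: "logit (logistic t) = t"
proof -
  have "0 < 1 + exp (- t)"
    by (simp add: add_pos_pos)
  then have "logistic t / (1 - logistic t) = 1 / exp (- t)"
    unfolding logistic_def by (simp add: field_simps)
  also have "\<dots> = exp t"
    by (simp add: exp_minus_inverse field_simps)
  finally show ?thesis
    unfolding logit_def by simp
qed

definition oscillation :: "real \<Rightarrow> real" where
  "oscillation x = logit (frac (1 / x))"

lemma oscillation_attains:
  fixes t :: "nat \<Rightarrow> real"
  obtains h where "\<And>n. 0 < h n \<and> h n \<le> 1" "h \<longlonglongrightarrow> 0"
    "\<And>n. oscillation (h n) = t n" "\<And>n. real n \<le> 1 / h n"
proof
  define h where "h n = 1 / (real n + 1 + logistic (t n))" for n
  have recip: "1 / h n = real n + 1 + logistic (t n)" for n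
    using logistic_pos[of "t n"] unfolding h_def by simp
  show "0 < h n \<and> h n \<le> 1" for n
    using logistic_pos[of "t n"] unfolding h_def by (simp add: field_simps)
  show "real n \<le> 1 / h n" for n
    using recip logistic_pos[of "t n"] by simp
  have "frac (1 / h n) = logistic (t n)" for n
    unfolding recip frac_unique_iff
    using logistic_pos[of "t n"] logistic_less_one[of "t n"] by (simp add: less_imp_le)
  then show "oscillation (h n) = t n" for n
    unfolding oscillation_def by (simp add: logit_logistic)
  show "h \<longlonglongrightarrow> 0"
  proof (rule real_tendsto_sandwich[OF _ _ tendsto_const LIMSEQ_inverse_real_of_nat])
    show "eventually (\<lambda>n. 0 \<le> h n) sequentially"
      using logistic_pos unfolding h_def by (simp add: less_imp_le add_pos_pos)
    have "h n \<le> inverse (real (Suc n))" for n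
      using logistic_pos[of "t n"] unfolding h_def by (simp add: inverse_eq_divide frac_le)
    then show "eventually (\<lambda>n. h n \<le> inverse (real (Suc n))) sequentially"
      by simp
  qed
qed

definition retract :: "ereal set \<Rightarrow> real \<Rightarrow> ereal" where
  "retract S t =
     (if ereal t \<in> S then ereal t
      else if 0 \<le> t \<and> \<infinity> \<in> S then \<infinity>
      else if t < 0 \<and> - \<infinity> \<in> S then - \<infinity>
      else (SOME s. s \<in> S))"

lemma retract_mem: "S \<noteq> {} \<Longrightarrow> retract S t \<in> S"
  unfolding retract_def by (auto intro: someI)

lemma retract_real: "ereal t \<in> S \<Longrightarrow> retract S t = ereal t"
  unfolding retract_def by simp

lemma retract_nonneg: "\<infinity> \<in> S \<Longrightarrow> 0 \<le> t \<Longrightarrow> retract S t \<in> {ereal t, \<infinity>}"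
  unfolding retract_def by simp

lemma retract_neg: "- \<infinity> \<in> S \<Longrightarrow> t < 0 \<Longrightarrow> retract S t \<in> {ereal t, - \<infinity>}"
  unfolding retract_def by simp

definition cluster_function :: "ereal set \<Rightarrow> real \<Rightarrow> real" where
  "cluster_function S x = ereal_at_scale (retract S (oscillation x)) x"

lemma subset_rh_seq_limits_cluster_function: "S \<subseteq> rh_seq_limits (cluster_function S)"
proof
  fix L assume "L \<in> S"
  show "L \<in> rh_seq_limits (cluster_function S)"
  proof (cases L)
    case (real r)
    obtain h where h: "\<And>n. 0 < h n \<and> h n \<le> 1" "h \<longlonglongrightarrow> 0" "\<And>n. oscillation (h n) = r"
      using oscillation_attains[of "\<lambda>_. r"] by metis
    have "cluster_function S (h n) = r" for n
      using \<open>L \<in> S\<close> real unfolding cluster_function_def h(3) by (simp add: retract_real)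
    with h real show ?thesis
      unfolding rh_seq_limits_def by (auto intro!: exI[of _ h])
  next
    case PInf
    obtain h where h: "\<And>n. 0 < h n \<and> h n \<le> 1" "h \<longlonglongrightarrow> 0"
      "\<And>n. oscillation (h n) = real n" "\<And>n. real n \<le> 1 / h n"
      using oscillation_attains[of real] by metis
    have "real n \<le> cluster_function S (h n)" for n
      using retract_nonneg[of S "real n"] \<open>L \<in> S\<close> PInf h(4)[of n]
      unfolding cluster_function_def h(3) by auto
    then have "filterlim (\<lambda>n. cluster_function S (h n)) at_top sequentially"
      by (auto intro: filterlim_at_top_mono[OF filterlim_real_sequentially])
    with h PInf show ?thesis
      unfolding rh_seq_limits_def tendsto_PInfty_eq_at_top[symmetric] by auto
  next
    case MInf
    obtain h where h: "\<And>n. 0 < h n \<and> h n \<le> 1" "h \<longlonglongrightarrow> 0"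
      "\<And>n. oscillation (h n) = - real n - 1" "\<And>n. real n \<le> 1 / h n"
      using oscillation_attains[of "\<lambda>n. - real n - 1"] by metis
    have "real n \<le> - cluster_function S (h n)" for n
      using retract_neg[of S "- real n - 1"] \<open>L \<in> S\<close> MInf h(4)[of n]
      unfolding cluster_function_def h(3) by auto
    then have "filterlim (\<lambda>n. - cluster_function S (h n)) at_top sequentially"
      by (auto intro: filterlim_at_top_mono[OF filterlim_real_sequentially])
    then have "(\<lambda>n. - ereal (- cluster_function S (h n))) \<longlonglongrightarrow> - \<infinity>"
      by (intro tendsto_uminus_ereal) (simp add: tendsto_PInfty_eq_at_top)
    with h MInf show ?thesis
      unfolding rh_seq_limits_def by auto
  qed
qed

theorem theorem2p5:
  fixes S :: "ereal set"
  assumes "S \<noteq> {}" and "ereal_seq_closed S"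
  shows "\<exists>f::real \<Rightarrow> real. rh_seq_secant_derivs f = S"
proof
  have "rh_seq_limits (cluster_function S) \<subseteq> S"
    using assms by (intro rh_seq_limits_subset) (auto simp: cluster_function_def intro: retract_mem)
  with subset_rh_seq_limits_cluster_function
  show "rh_seq_secant_derivs (\<lambda>x. x * cluster_function S x) = S"
    unfolding rh_seq_secant_derivs_times by blast
qed

end
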